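(* Let $n\ge 1$ and let $w$ be a word of length $m$ over the alphabet $[n+1]$ that contains, for every permutation $\pi$ of length $n$, a subsequence order-isomorphic to $\pi$. Then $(n+1)\left(\frac{m}{n+1}\right)^n\ge n!$. Consequently $m\ge (n+1)\,(n!/(n+1))^{1/n}$, and in particular $m\ge (1-o(1))\,n^2/e$ as $n\to\infty$.
   Context: A permutation of length $n$ is a word containing each letter of $[n]=\{1,\dots,n\}$ exactly once. Words $u,v$ of length $k$ are order-isomorphic if $u(i)>u(j)\iff v(i)>v(j)$ for all $i,j\in[k]$. A word $w$ contains a subsequence order-isomorphic to $\pi$ if there are indices $i_1<\cdots<i_n$ with $w(i_1)\cdots w(i_n)$ order-isomorphic to $\pi$. *)

theory Defs
  imports Complex_Main "HOL-Library.Sublist"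
begin

definition order_iso :: "nat list \<Rightarrow> nat list \<Rightarrow> bool" where
  "order_iso u v \<longleftrightarrow> length u = length v \<and>
     (\<forall>i<length u. \<forall>j<length u. (u ! i > u ! j \<longleftrightarrow> v ! i > v ! j))"

definition is_perm_word :: "nat \<Rightarrow> nat list \<Rightarrow> bool" where
  "is_perm_word n p \<longleftrightarrow> length p = n \<and> distinct p \<and> set p = {1..n}"

definition contains_pattern :: "nat list \<Rightarrow> nat list \<Rightarrow> bool" where
  "contains_pattern w p \<longleftrightarrow> (\<exists>u. subseq u w \<and> order_iso u p)"

definition superpattern :: "nat \<Rightarrow> nat list \<Rightarrow> bool" where
  "superpattern n w \<longleftrightarrow> (\<forall>p. is_perm_word n p \<longrightarrow> contains_pattern w p)"

end

theory Submission
  imports Defs "HOL-Analysis.Convex" "HOL-Combinatorics.Multiset_Permutations"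
begin

text \<open>
  Distinct permutations of length \<open>n\<close> occur in \<open>w\<close> at distinct sets of \<open>n\<close> positions, and
  since a permutation has distinct letters, each such set carries \<open>n\<close> distinct letters of
  \<open>[n+1]\<close>. The set is therefore determined by the one letter \<open>k\<close> it misses together with
  one position of each other letter, so with \<open>c\<^sub>j\<close> the number of occurrences of \<open>j\<close> in \<open>w\<close>
  we get \<open>n! \<le> \<Sum>\<^sub>k \<Prod>\<^sub>j\<^sub>\<noteq>\<^sub>k c\<^sub>j\<close>. By Maclaurin's inequality this elementary symmetric
  polynomial is at most \<open>(n+1)(m/(n+1))\<^sup>n\<close>, as \<open>\<Sum> c\<^sub>j \<le> m\<close>. Taking \<open>n\<close>-th roots and using
  \<open>n! \<ge> (n/e)\<^sup>n\<close> and \<open>(n+1)\<^bsup>1/n\<^esup> \<rightarrow> 1\<close> gives the asymptotic bound.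
\<close>

lemma order_iso_sym: "order_iso u v \<Longrightarrow> order_iso v u"
  unfolding order_iso_def by auto

lemma order_iso_trans: "order_iso u v \<Longrightarrow> order_iso v x \<Longrightarrow> order_iso u x"
  unfolding order_iso_def by auto

lemma distinct_if_order_iso:
  assumes "order_iso u p" "distinct p"
  shows "distinct u"
  unfolding distinct_conv_nth
proof (intro allI impI)
  fix i j assume ij: "i < length u" "j < length u" "i \<noteq> j"
  with assms have "p ! i \<noteq> p ! j"
    unfolding order_iso_def distinct_conv_nth by simp
  moreover have "u ! i > u ! j \<longleftrightarrow> p ! i > p ! j" "u ! j > u ! i \<longleftrightarrow> p ! j > p ! i"
    using assms ij unfolding order_iso_def by auto
  ultimately show "u ! i \<noteq> u ! j" by auto
qed

lemma is_perm_word_iff: "is_perm_word n p \<longleftrightarrow> p \<in> permutations_of_set {1..n}"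
  unfolding is_perm_word_def permutations_of_set_def
  by (auto dest: distinct_card)

lemma card_le_nth_perm_word:
  assumes p: "is_perm_word n p" and i: "i < n"
  shows "card {j. j < n \<and> p ! j \<le> p ! i} = p ! i"
proof -
  have len: "length p = n" and d: "distinct p" and sp: "set p = {1..n}"
    using p unfolding is_perm_word_def by auto
  have "nth p ` {j. j < n \<and> p ! j \<le> p ! i} = {x \<in> set p. x \<le> p ! i}"
    using len by (auto simp: in_set_conv_nth)
  also have "\<dots> = {1..p ! i}"
    using i len sp nth_mem[of i p] by auto
  finally have "nth p ` {j. j < n \<and> p ! j \<le> p ! i} = {1..p ! i}" .
  moreover have "inj_on (nth p) {j. j < n \<and> p ! j \<le> p ! i}"
    using d len by (auto simp: inj_on_def distinct_conv_nth)
  ultimately show ?thesis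
    by (metis card_atLeastAtMost card_image diff_Suc_1)
qed

lemma perm_word_eq_if_order_iso:
  assumes p: "is_perm_word n p" and q: "is_perm_word n q" and "order_iso p q"
  shows "p = q"
proof (rule nth_equalityI)
  show "length p = length q" using p q unfolding is_perm_word_def by simp
next
  fix i assume "i < length p"
  with p have i: "i < n" and len: "length p = n" unfolding is_perm_word_def by auto
  have "{j. j < n \<and> p ! j \<le> p ! i} = {j. j < n \<and> q ! j \<le> q ! i}"
    using \<open>order_iso p q\<close> i len unfolding order_iso_def by (auto simp: not_less[symmetric])
  then show "p ! i = q ! i"
    using card_le_nth_perm_word[OF p i] card_le_nth_perm_word[OF q i] by simp
qed

definition positions :: "nat list \<Rightarrow> nat \<Rightarrow> nat set" where
  "positions w j = {i. i < length w \<and> w ! i = j}"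

definition injective_index_sets :: "nat list \<Rightarrow> nat \<Rightarrow> nat set set" where
  "injective_index_sets w n = {I. I \<subseteq> {..<length w} \<and> inj_on (nth w) I \<and> card I = n}"

lemma subseq_eq_nths_index_set:
  assumes "subseq u w"
  obtains I where "I \<subseteq> {..<length w}" "u = nths w I"
proof -
  from assms obtain N where "u = nths w N" by (auto simp: subseq_conv_nths)
  moreover have "nths w (N \<inter> {..<length w}) = nths w N"
    unfolding nths_def by (intro arg_cong[where f="map fst"] filter_cong) (auto dest: set_zip_rightD)
  ultimately show thesis using that[of "N \<inter> {..<length w}"] by auto
qed

lemma index_set_of_distinct_nths:
  assumes I: "I \<subseteq> {..<length w}" and d: "distinct (nths w I)"
  shows "inj_on (nth w) I" "card I = length (nths w I)"
proof -
  have "{i. i < length w \<and> i \<in> I} = I" using I by auto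
  then show len: "card I = length (nths w I)" by (simp add: length_nths)
  have "nth w ` I = set (nths w I)" using I by (auto simp: set_nths)
  then have "card (nth w ` I) = card I" using d len by (simp add: distinct_card)
  then show "inj_on (nth w) I"
    using I finite_subset by (blast intro: eq_card_imp_inj_on)
qed

lemma fact_le_card_injective_index_sets:
  assumes "superpattern n w"
  shows "fact n \<le> card (injective_index_sets w n)"
proof -
  define P where "P = permutations_of_set {1..n}"
  have "\<exists>I \<in> injective_index_sets w n. order_iso (nths w I) p" if "p \<in> P" for p
  proof -
    have p: "is_perm_word n p" using that unfolding P_def is_perm_word_iff .
    with assms obtain u where "subseq u w" and up: "order_iso u p"
      unfolding superpattern_def contains_pattern_def by blast
    from \<open>subseq u w\<close> obtain I where I: "I \<subseteq> {..<length w}" "u = nths w I"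
      by (rule subseq_eq_nths_index_set)
    have "distinct u" using up p distinct_if_order_iso unfolding is_perm_word_def by blast
    with I up p have "I \<in> injective_index_sets w n"
      using index_set_of_distinct_nths[of I w]
      unfolding injective_index_sets_def order_iso_def is_perm_word_def by auto
    with I up show ?thesis by blast
  qed
  then obtain occ where occ: "\<And>p. p \<in> P \<Longrightarrow> occ p \<in> injective_index_sets w n \<and> order_iso (nths w (occ p)) p"
    by metis
  have "inj_on occ P"
  proof (rule inj_onI)
    fix p q assume "p \<in> P" "q \<in> P" "occ p = occ q"
    with occ have "order_iso p q" by (metis order_iso_sym order_iso_trans)
    then show "p = q"
      using \<open>p \<in> P\<close> \<open>q \<in> P\<close> perm_word_eq_if_order_iso unfolding P_def is_perm_word_iff by blast
  qed
  moreover have "finite (injective_index_sets w n)"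
    unfolding injective_index_sets_def by (rule finite_subset[of _ "Pow {..<length w}"]) auto
  ultimately have "card P \<le> card (injective_index_sets w n)"
    using occ by (intro card_inj_on_le) auto
  then show ?thesis unfolding P_def by simp
qed

lemma injective_index_set_as_image:
  assumes w: "set w \<subseteq> A" and A: "finite A" "card A = Suc n"
    and I: "I \<in> injective_index_sets w n"
  obtains k f where "k \<in> A" "f \<in> PiE (A - {k}) (positions w)" "I = f ` (A - {k})"
proof -
  from I have I_sub: "I \<subseteq> {..<length w}" and inj: "inj_on (nth w) I" and "card I = n"
    unfolding injective_index_sets_def by auto
  define W where "W = nth w ` I"
  have WA: "W \<subseteq> A" unfolding W_def using I_sub w by force
  have "card W = n" unfolding W_def using card_image[OF inj] \<open>card I = n\<close> by simp
  then have "card (A - W) = 1"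
    using card_Diff_subset[OF finite_subset[OF WA A(1)] WA] A(2) by simp
  then obtain k where k: "A - W = {k}" by (rule card_1_singletonE)
  then have kA: "k \<in> A" and W: "W = A - {k}" using WA by auto
  define f where "f = restrict (the_inv_into I (nth w)) (A - {k})"
  have "f \<in> PiE (A - {k}) (positions w)"
  proof (rule PiE_I)
    fix j assume "j \<in> A - {k}"
    then obtain i where i: "i \<in> I" "j = w ! i" using W W_def by auto
    then have "f j = i" unfolding f_def using \<open>j \<in> A - {k}\<close> the_inv_into_f_f[OF inj] by simp
    then show "f j \<in> positions w j" unfolding positions_def using i I_sub by auto
  qed (auto simp: f_def)
  moreover have "f ` (A - {k}) = I"
    unfolding f_def W[symmetric] W_def using inj by simp
  ultimately show thesis using that kA by blast
qed

lemma card_injective_index_sets_le: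
  assumes "set w \<subseteq> A" "finite A" "card A = Suc n"
  shows "card (injective_index_sets w n) \<le> (\<Sum>k\<in>A. \<Prod>j\<in>A - {k}. card (positions w j))"
proof -
  define T where "T = (SIGMA k:A. PiE (A - {k}) (positions w))"
  have fin: "finite (positions w j)" for j unfolding positions_def by simp
  have "injective_index_sets w n \<subseteq> (\<lambda>(k, f). f ` (A - {k})) ` T"
  proof
    fix I assume "I \<in> injective_index_sets w n"
    with assms obtain k f where "k \<in> A" "f \<in> PiE (A - {k}) (positions w)" "I = f ` (A - {k})"
      by (rule injective_index_set_as_image)
    then show "I \<in> (\<lambda>(k, f). f ` (A - {k})) ` T" unfolding T_def by force
  qed
  then have "card (injective_index_sets w n) \<le> card T"
    using assms fin unfolding T_def by (intro surj_card_le finite_SigmaI finite_PiE) auto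
  also have "card T = (\<Sum>k\<in>A. \<Prod>j\<in>A - {k}. card (positions w j))"
    unfolding T_def using assms fin by (simp add: card_PiE finite_PiE)
  finally show ?thesis .
qed

lemma sum_card_positions_le:
  assumes "finite B"
  shows "(\<Sum>j\<in>B. card (positions w j)) \<le> length w"
proof -
  have "(\<Sum>j\<in>B. card (positions w j)) = card (\<Union>j\<in>B. positions w j)"
    using assms by (intro card_UN_disjoint[symmetric]) (auto simp: positions_def)
  also have "\<dots> \<le> card {..<length w}" by (intro card_mono) (auto simp: positions_def)
  finally show ?thesis by simp
qed

lemma power_tangent_le:
  fixes s t :: real
  assumes "0 \<le> s" "0 \<le> t"
  shows "t ^ Suc k + real (Suc k) * t ^ k * (s - t) \<le> s ^ Suc k"
proof (cases "t = 0")
  case True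
  then show ?thesis using assms by (cases k) auto
next
  case False
  with assms have t: "t > 0" by simp
  have "1 + real (Suc k) * (s / t - 1) \<le> (1 + (s / t - 1)) ^ Suc k"
    using assms t by (intro Bernoulli_inequality) simp
  then have "(1 + real (Suc k) * (s / t - 1)) * t ^ Suc k \<le> (s / t) ^ Suc k * t ^ Suc k"
    using t by (intro mult_right_mono) auto
  also have "(s / t) ^ Suc k * t ^ Suc k = s ^ Suc k"
    using t by (simp add: power_divide)
  also have "(1 + real (Suc k) * (s / t - 1)) * t ^ Suc k = t ^ Suc k + real (Suc k) * t ^ k * (s - t)"
    using t by (simp add: field_simps)
  finally show ?thesis .
qed

lemma prod_le_mean_power:
  fixes a :: "'a \<Rightarrow> real"
  assumes "finite A" "A \<noteq> {}" "\<And>i. i \<in> A \<Longrightarrow> 0 \<le> a i"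
  shows "(\<Prod>i\<in>A. a i) \<le> ((\<Sum>i\<in>A. a i) / card A) ^ card A"
proof -
  have N: "card A > 0" using assms by (simp add: card_gt_0_iff)
  have p: "0 \<le> (\<Prod>i\<in>A. a i)" using assms by (simp add: prod_nonneg)
  have "root (card A) (\<Prod>i\<in>A. a i) \<le> (\<Sum>i\<in>A. a i) / card A"
    using arith_geom_mean[OF assms] N p by (simp add: sum_divide_distrib root_powr_inverse)
  then have "root (card A) (\<Prod>i\<in>A. a i) ^ card A \<le> ((\<Sum>i\<in>A. a i) / card A) ^ card A"
    using p by (intro power_mono) (auto intro: real_root_ge_zero)
  then show ?thesis using N p by (simp add: real_root_pow_pos2)
qed

lemma sum_prod_omit_le:
  fixes a :: "'a \<Rightarrow> real"
  assumes "finite A" "card A = Suc k" "\<And>i. i \<in> A \<Longrightarrow> 0 \<le> a i"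
  shows "(\<Sum>i\<in>A. \<Prod>j\<in>A-{i}. a j) \<le> real (Suc k) * ((\<Sum>i\<in>A. a i) / real (Suc k)) ^ k"
  using assms
proof (induction A arbitrary: k rule: finite_induct)
  case empty
  then show ?case by simp
next
  case (insert x B)
  show ?case
  proof (cases "B = {}")
    case True
    with insert show ?thesis by simp
  next
    case False
    with insert obtain m where k: "k = Suc m" and B: "card B = Suc m"
      by (cases "card B") auto
    define t where "t = (\<Sum>i\<in>B. a i) / real (Suc m)"
    define s where "s = (\<Sum>i\<in>insert x B. a i) / real (Suc (Suc m))"
    have ax: "0 \<le> a x" and aB: "\<And>i. i \<in> B \<Longrightarrow> 0 \<le> a i"
      using insert.prems by auto
    then have t: "0 \<le> t" and s: "0 \<le> s"
      unfolding t_def s_def by (auto intro!: divide_nonneg_nonneg sum_nonneg)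
    have hs: "real (Suc (Suc m)) * s = a x + real (Suc m) * t"
      using insert.hyps unfolding s_def t_def by simp
    have P: "(\<Prod>j\<in>B. a j) \<le> t ^ Suc m"
      using prod_le_mean_power[of B a] aB False insert.hyps unfolding t_def B by simp
    have S: "(\<Sum>i\<in>B. \<Prod>j\<in>B-{i}. a j) \<le> real (Suc m) * t ^ m"
      using insert.IH[OF B aB] unfolding t_def .
    have "(\<Sum>i\<in>insert x B. \<Prod>j\<in>insert x B-{i}. a j)
        = (\<Prod>j\<in>B. a j) + (\<Sum>i\<in>B. a x * (\<Prod>j\<in>B-{i}. a j))"
      using insert.hyps by (auto simp: insert_Diff_if intro!: sum.cong)
    also have "\<dots> \<le> t ^ Suc m + a x * (real (Suc m) * t ^ m)"
      using P S ax by (auto simp: sum_distrib_left[symmetric] intro!: add_mono mult_left_mono)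
    \<comment> \<open>tangent line of \<open>x\<^sup>m\<^sup>+\<^sup>1\<close> at the old mean \<open>t\<close>, evaluated at the new mean \<open>s\<close>\<close>
    also have "\<dots> = real (Suc (Suc m)) * t ^ Suc m
        + real (Suc m) * t ^ m * (real (Suc (Suc m)) * s - real (Suc (Suc m)) * t)"
      unfolding hs by (simp add: algebra_simps)
    also have "\<dots> = real (Suc (Suc m)) * (t ^ Suc m + real (Suc m) * t ^ m * (s - t))"
      by (simp add: algebra_simps)
    also have "\<dots> \<le> real (Suc (Suc m)) * s ^ Suc m"
      using power_tangent_le[OF s t, of m] by (intro mult_left_mono) auto
    finally show ?thesis
      unfolding k s_def using insert.hyps by simp
  qed
qed

lemma superpattern_power_bound:
  assumes w: "set w \<subseteq> {1..n+1}" and sp: "superpattern n w"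
  shows "fact n \<le> (real n + 1) * (real (length w) / (real n + 1)) ^ n"
proof -
  define c where "c j = real (card (positions w j))" for j
  have "fact n \<le> (\<Sum>k\<in>{1..n+1}. \<Prod>j\<in>{1..n+1} - {k}. card (positions w j))"
    using order_trans[OF fact_le_card_injective_index_sets[OF sp] card_injective_index_sets_le[OF w]]
    by simp
  then have "real (fact n) \<le> real (\<Sum>k\<in>{1..n+1}. \<Prod>j\<in>{1..n+1} - {k}. card (positions w j))"
    by (rule of_nat_mono)
  then have "(fact n :: real) \<le> (\<Sum>k\<in>{1..n+1}. \<Prod>j\<in>{1..n+1} - {k}. c j)"
    unfolding c_def by simp
  also have "\<dots> \<le> real (Suc n) * ((\<Sum>j\<in>{1..n+1}. c j) / real (Suc n)) ^ n"
    by (rule sum_prod_omit_le) (simp_all add: c_def)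
  also have "\<dots> \<le> real (Suc n) * (real (length w) / real (Suc n)) ^ n"
  proof -
    have "(\<Sum>j\<in>{1..n+1}. c j) \<le> real (length w)"
      using of_nat_mono[OF sum_card_positions_le[of "{1..n+1}" w]] unfolding c_def by simp
    moreover have "0 \<le> (\<Sum>j\<in>{1..n+1}. c j)"
      unfolding c_def by (simp add: sum_nonneg)
    ultimately show ?thesis
      by (intro mult_left_mono power_mono divide_right_mono) simp_all
  qed
  finally show ?thesis by (simp add: add.commute)
qed

lemma mult_root_le_if_le_mult_power:
  fixes a c m :: real
  assumes "n > 0" "c > 0" "m \<ge> 0" "a \<le> c * (m / c) ^ n"
  shows "c * root n (a / c) \<le> m"
proof -
  have "root n (a / c) \<le> root n ((m / c) ^ n)"
    using assms by (intro real_root_le_mono) (simp_all add: pos_divide_le_eq mult.commute)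
  also have "\<dots> = m / c"
    using assms by (simp add: real_root_power_cancel)
  finally show ?thesis
    using assms by (simp add: pos_le_divide_eq mult.commute)
qed

lemma power_div_fact_le_exp:
  fixes x :: real
  assumes "0 \<le> x"
  shows "x ^ n / fact n \<le> exp x"
proof -
  have s: "(\<lambda>k. x ^ k / fact k) sums exp x"
    using exp_converges[of x] by (simp add: divide_inverse mult.commute)
  have "(\<Sum>k\<in>{n}. x ^ k / fact k) \<le> (\<Sum>k. x ^ k / fact k)"
    using assms by (intro sum_le_suminf) (auto intro: sums_summable[OF s])
  then show ?thesis using sums_unique[OF s] by simp
qed

lemma root_fact_ge:
  assumes "n > 0"
  shows "real n / exp 1 \<le> root n (fact n)"
proof -
  have "real n ^ n / fact n \<le> exp 1 ^ n"
    using power_div_fact_le_exp[of "real n" n] by (simp add: exp_of_nat_mult[symmetric])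
  then have "(real n / exp 1) ^ n \<le> fact n"
    by (simp add: power_divide field_simps)
  then have "root n ((real n / exp 1) ^ n) \<le> root n (fact n)"
    using assms by (intro real_root_le_mono) auto
  then show ?thesis
    using assms by (simp add: real_root_power_cancel)
qed

lemma tendsto_root_Suc_self: "(\<lambda>n. root n (real n + 1)) \<longlonglongrightarrow> 1"
proof (rule real_tendsto_sandwich)
  show "\<forall>\<^sub>F n in sequentially. 1 \<le> root n (real n + 1)"
    using eventually_ge_at_top[of 1] by eventually_elim simp
  show "\<forall>\<^sub>F n in sequentially. root n (real n + 1) \<le> root n 2 * root n (real n)"
    using eventually_ge_at_top[of 1]
  proof eventually_elim
    case (elim n)
    then have "root n (real n + 1) \<le> root n (2 * real n)" by (intro real_root_le_mono) auto
    then show ?case by (simp add: real_root_mult)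
  qed
  have "(\<lambda>n. root n 2 * root n (real n)) \<longlonglongrightarrow> 1 * 1"
    by (intro tendsto_mult LIMSEQ_root_const LIMSEQ_root) auto
  then show "(\<lambda>n. root n 2 * root n (real n)) \<longlonglongrightarrow> 1" by simp
qed simp

lemma superpattern_length_asymptotic:
  assumes n: "n \<ge> 1" and w: "set w \<subseteq> {1..n+1}" and sp: "superpattern n w"
  shows "real n ^ 2 / (exp 1 * root n (real n + 1)) \<le> real (length w)"
proof -
  define r where "r = root n (real n + 1)"
  have r: "r > 0" unfolding r_def using n by simp
  have "real n ^ 2 / (exp 1 * r) \<le> (real n + 1) * ((real n / exp 1) / r)"
    using r by (simp add: power2_eq_square field_simps)
  also have "\<dots> \<le> (real n + 1) * (root n (fact n) / r)"
    using root_fact_ge n r by (intro mult_left_mono divide_right_mono) auto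
  also have "\<dots> = (real n + 1) * root n (fact n / (real n + 1))"
    unfolding r_def by (simp add: real_root_divide)
  also have "\<dots> \<le> real (length w)"
    using n superpattern_power_bound[OF w sp] by (intro mult_root_le_if_le_mult_power) auto
  finally show ?thesis unfolding r_def .
qed

theorem mainTheorem8:
  shows "(\<forall>n w. n \<ge> 1 \<longrightarrow> set w \<subseteq> {1..n+1} \<longrightarrow> superpattern n w \<longrightarrow>
            (let m = real (length w) in
               (real n + 1) * (m / (real n + 1)) ^ n \<ge> fact n \<and>
               m \<ge> (real n + 1) * root n (fact n / (real n + 1))))
       \<and> (\<exists>\<epsilon> :: nat \<Rightarrow> real. \<epsilon> \<longlonglongrightarrow> 0 \<and>
            (\<forall>n w. n \<ge> 1 \<longrightarrow> set w \<subseteq> {1..n+1} \<longrightarrow> superpattern n w \<longrightarrow>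
               real (length w) \<ge> (1 - \<epsilon> n) * real n ^ 2 / exp 1))"
proof
  show "\<forall>n w. n \<ge> 1 \<longrightarrow> set w \<subseteq> {1..n+1} \<longrightarrow> superpattern n w \<longrightarrow>
          (let m = real (length w) in
             (real n + 1) * (m / (real n + 1)) ^ n \<ge> fact n \<and>
             m \<ge> (real n + 1) * root n (fact n / (real n + 1)))"
    using superpattern_power_bound mult_root_le_if_le_mult_power by (auto simp: Let_def)
next
  define \<epsilon> where "\<epsilon> n = 1 - 1 / root n (real n + 1)" for n
  have "\<epsilon> \<longlonglongrightarrow> 1 - 1 / 1"
    unfolding \<epsilon>_def by (intro tendsto_intros tendsto_root_Suc_self) simp
  moreover have "(1 - \<epsilon> n) * real n ^ 2 / exp 1 = real n ^ 2 / (exp 1 * root n (real n + 1))" for n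
    unfolding \<epsilon>_def by simp
  ultimately show "\<exists>\<epsilon> :: nat \<Rightarrow> real. \<epsilon> \<longlonglongrightarrow> 0 \<and>
          (\<forall>n w. n \<ge> 1 \<longrightarrow> set w \<subseteq> {1..n+1} \<longrightarrow> superpattern n w \<longrightarrow>
             real (length w) \<ge> (1 - \<epsilon> n) * real n ^ 2 / exp 1)"
    using superpattern_length_asymptotic by auto
qed

end
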